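(* Let $d$ be a square-free positive integer and $N=U^{\oplus2}\oplus E_8^{\oplus2}\oplus\langle-2\rangle\oplus\langle-2d\rangle$, and let $I_2(N)$ be the set of primitive isotropic rank-two sublattices of $N$. The natural map $I_2(N)/O^+(N)\to I_2(N)/O(N)$ is a bijection.
   Context: $O^+(N)$ is the index-two subgroup of $O(N)$ of isometries of real spinor norm $1$ (the real spinor norm of a product of reflections $\rho_{v_1}\cdots\rho_{v_m}$, $v_i\in N_{\mathbb R}$, is $\prod(-v_i^2/2)$ modulo squares). *)

theory Defs
  imports Complex_Main "HOL-Computational_Algebra.Squarefree"
begin

text \<open>The lattice N = U^2 + E8(-1)^2 + <-2> + <-2d> of rank 22, realised as Z^22,
  vectors being functions nat => int supported on {..<22}.
  Coordinates 0-1 and 2-3: hyperbolic planes U; 4-11 and 12-19: E8 (negative definite,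
  signature (2,20) convention); 20: <-2>; 21: <-2d>.\<close>

definition lat :: "(nat \<Rightarrow> int) set" where
  "lat = {x. \<forall>i\<ge>22. x i = 0}"

definition latR :: "(nat \<Rightarrow> real) set" where
  "latR = {x. \<forall>i\<ge>22. x i = 0}"

text \<open>Adjacency of the E8 Dynkin diagram (Bourbaki labelling, shifted to 0..7).\<close>
definition e8adj :: "nat \<Rightarrow> nat \<Rightarrow> bool" where
  "e8adj i j = ((i, j) \<in> {(0,2),(2,3),(3,4),(4,5),(5,6),(6,7),(1,3)} \<or>
                (j, i) \<in> {(0,2),(2,3),(3,4),(4,5),(5,6),(6,7),(1,3)})"

definition e8m :: "nat \<Rightarrow> nat \<Rightarrow> int" where
  "e8m i j = (if i = j then -2 else if e8adj i j then 1 else 0)"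

definition gram :: "nat \<Rightarrow> nat \<Rightarrow> nat \<Rightarrow> int" where
  "gram d i j =
     (if i < 4 \<and> j < 4 then (if i div 2 = j div 2 \<and> i \<noteq> j then 1 else 0)
      else if 4 \<le> i \<and> i < 12 \<and> 4 \<le> j \<and> j < 12 then e8m (i - 4) (j - 4)
      else if 12 \<le> i \<and> i < 20 \<and> 12 \<le> j \<and> j < 20 then e8m (i - 12) (j - 12)
      else if i = 20 \<and> j = 20 then -2
      else if i = 21 \<and> j = 21 then - 2 * int d
      else 0)"

definition bil :: "nat \<Rightarrow> (nat \<Rightarrow> int) \<Rightarrow> (nat \<Rightarrow> int) \<Rightarrow> int" where
  "bil d x y = (\<Sum>i<22. \<Sum>j<22. x i * gram d i j * y j)"

definition bilR :: "nat \<Rightarrow> (nat \<Rightarrow> real) \<Rightarrow> (nat \<Rightarrow> real) \<Rightarrow> real" where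
  "bilR d x y = (\<Sum>i<22. \<Sum>j<22. x i * of_int (gram d i j) * y j)"

definition mv :: "(nat \<Rightarrow> nat \<Rightarrow> int) \<Rightarrow> (nat \<Rightarrow> int) \<Rightarrow> (nat \<Rightarrow> int)" where
  "mv g x = (\<lambda>i. if i < 22 then (\<Sum>j<22. g i j * x j) else 0)"

definition mvR :: "(nat \<Rightarrow> nat \<Rightarrow> int) \<Rightarrow> (nat \<Rightarrow> real) \<Rightarrow> (nat \<Rightarrow> real)" where
  "mvR g x = (\<lambda>i. if i < 22 then (\<Sum>j<22. of_int (g i j) * x j) else 0)"

definition OrthN :: "nat \<Rightarrow> (nat \<Rightarrow> nat \<Rightarrow> int) set" where
  "OrthN d = {g. (\<forall>i j. (22 \<le> i \<or> 22 \<le> j) \<longrightarrow> g i j = 0) \<and>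
                 bij_betw (mv g) lat lat \<and>
                 (\<forall>x\<in>lat. \<forall>y\<in>lat. bil d (mv g x) (mv g y) = bil d x y)}"

definition reflR :: "nat \<Rightarrow> (nat \<Rightarrow> real) \<Rightarrow> (nat \<Rightarrow> real) \<Rightarrow> (nat \<Rightarrow> real)" where
  "reflR d v x = (\<lambda>i. x i - 2 * bilR d x v / bilR d v v * v i)"

text \<open>O^+(N): isometries of real spinor norm 1, i.e. which are a product of reflections
  rho_{v_1} ... rho_{v_m} (v_i in N_R, v_i^2 <> 0) with prod (- v_i^2 / 2) a positive real
  (a square in R^*).\<close>
definition OrthPlusN :: "nat \<Rightarrow> (nat \<Rightarrow> nat \<Rightarrow> int) set" where
  "OrthPlusN d = {g \<in> OrthN d. \<exists>vs :: (nat \<Rightarrow> real) list.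
       (\<forall>v\<in>set vs. v \<in> latR \<and> bilR d v v \<noteq> 0) \<and>
       (\<forall>x\<in>latR. mvR g x = foldr (\<lambda>v f. reflR d v \<circ> f) vs id x) \<and>
       (\<Prod>v\<leftarrow>vs. - bilR d v v / 2) > 0}"

definition I2 :: "nat \<Rightarrow> (nat \<Rightarrow> int) set set" where
  "I2 d = {L. (\<exists>e\<in>lat. \<exists>f\<in>lat.
              (\<forall>a b. (\<lambda>i. a * e i + b * f i) = (\<lambda>i. 0) \<longrightarrow> a = 0 \<and> b = 0) \<and>
              L = {(\<lambda>i. a * e i + b * f i) | a b. True}) \<and>
           (\<forall>x\<in>lat. \<forall>k::int. k \<noteq> 0 \<and> (\<lambda>i. k * x i) \<in> L \<longrightarrow> x \<in> L) \<and>
           (\<forall>x\<in>L. \<forall>y\<in>L. bil d x y = 0)}"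

definition orbrel :: "nat \<Rightarrow> (nat \<Rightarrow> nat \<Rightarrow> int) set \<Rightarrow> ((nat \<Rightarrow> int) set \<times> (nat \<Rightarrow> int) set) set" where
  "orbrel d H = {(L, L'). L \<in> I2 d \<and> L' \<in> I2 d \<and> (\<exists>g\<in>H. mv g ` L = L')}"

end

theory Submission
  imports Defs
begin

text \<open>Every isometry of \<open>N\<^sub>\<real>\<close> is a product of reflections (Cartan--Dieudonn\'e, by induction
  along an explicit orthogonal basis), so every \<open>g \<in> O(N)\<close> has a reflection word, and its
  spinor product is nonzero. If it is negative, \<open>g\<close> is corrected by an element of the stabiliser
  of \<open>L \<in> I\<^sub>2(N)\<close> of negative spinor product. Pick a primitive \<open>c \<in> L\<close> without
  \<open>\<langle>-2d\<rangle>\<close>-component; as \<open>U\<^sup>2 \<oplus> E\<^sub>8\<^sup>2 \<oplus> \<langle>-2\<rangle>\<close> has discriminant group \<open>\<int>/2\<close>, the divisor \<open>a\<close>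
  of \<open>c\<close> is 1 or 2. For \<open>y \<in> N\<close> with \<open>(c, y) = a\<close>, the transvection \<open>z \<mapsto> z - (2/a)(z, y) c\<close>
  of \<open>c\<^sup>\<bottom>\<close> extends to the integral isometry \<open>\<rho>\<^sub>p\<^sub>1 \<rho>\<^sub>p\<^sub>2\<close>, where \<open>p\<^sub>1, p\<^sub>2\<close> is an orthogonal
  basis of \<open>\<real>c + \<real>y\<close> with \<open>p\<^sub>1\<^sup>2 = 1\<close> and \<open>p\<^sub>2\<^sup>2 = -1\<close>. It maps \<open>L \<subseteq> c\<^sup>\<bottom>\<close> into itself and
  has spinor product \<open>-1/4\<close>. Hence the \<open>O(N)\<close>- and \<open>O\<^sup>+(N)\<close>-orbit relations on \<open>I\<^sub>2(N)\<close> coincide.\<close>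

section \<open>Coordinates and an orthogonal basis of \<open>N\<^sub>\<real>\<close>\<close>

lemma sum_lessThan_22:
  "(\<Sum>i<(22::nat). f i) = f 0 + f 1 + f 2 + f 3 + f 4 + f 5 + f 6 + f 7 + f 8 + f 9 + f 10 + f 11
     + f 12 + f 13 + f 14 + f 15 + f 16 + f 17 + f 18 + f 19 + f 20 + (f 21 :: 'a::comm_monoid_add)"
  by (simp add: sum.lessThan_Suc eval_nat_numeral)

lemma all_less_Suc_iff: "(\<forall>i<Suc n. P i) \<longleftrightarrow> (\<forall>i<n. P i) \<and> P n"
  by (auto simp: less_Suc_eq)

lemma all_less_22_iff:
  "(\<forall>i<(22::nat). P i) \<longleftrightarrow> P 0 \<and> P 1 \<and> P 2 \<and> P 3 \<and> P 4 \<and> P 5 \<and> P 6 \<and> P 7 \<and> P 8 \<and> P 9 \<and> P 10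
     \<and> P 11 \<and> P 12 \<and> P 13 \<and> P 14 \<and> P 15 \<and> P 16 \<and> P 17 \<and> P 18 \<and> P 19 \<and> P 20 \<and> P 21"
  by (simp add: all_less_Suc_iff eval_nat_numeral conj_ac)

lemma sum_lessThan_8:
  "(\<Sum>i<(8::nat). f i) = f 0 + f 1 + f 2 + f 3 + f 4 + f 5 + f 6 + (f 7 :: 'a::comm_monoid_add)"
  by (simp add: sum.lessThan_Suc eval_nat_numeral)

lemma all_less_8_iff: "(\<forall>i<(8::nat). P i) \<longleftrightarrow> P 0 \<and> P 1 \<and> P 2 \<and> P 3 \<and> P 4 \<and> P 5 \<and> P 6 \<and> P 7"
  by (simp add: all_less_Suc_iff eval_nat_numeral conj_ac)

definition e8_block_form :: "nat \<Rightarrow> (nat \<Rightarrow> real) \<Rightarrow> (nat \<Rightarrow> real) \<Rightarrow> real" where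
 "e8_block_form s x y = -2 * (x s * y s + x (s+1) * y (s+1) + x (s+2) * y (s+2) + x (s+3) * y (s+3)
   + x (s+4) * y (s+4) + x (s+5) * y (s+5) + x (s+6) * y (s+6) + x (s+7) * y (s+7))
   + (x s * y (s+2) + x (s+2) * y s) + (x (s+2) * y (s+3) + x (s+3) * y (s+2))
   + (x (s+3) * y (s+4) + x (s+4) * y (s+3)) + (x (s+4) * y (s+5) + x (s+5) * y (s+4))
   + (x (s+5) * y (s+6) + x (s+6) * y (s+5)) + (x (s+6) * y (s+7) + x (s+7) * y (s+6))
   + (x (s+1) * y (s+3) + x (s+3) * y (s+1))"

lemma bilR_expand: "bilR d x y = x 0 * y 1 + x 1 * y 0 + x 2 * y 3 + x 3 * y 2
   + e8_block_form 4 x y + e8_block_form 12 x y - 2 * x 20 * y 20 - 2 * of_nat d * x 21 * y 21"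
  unfolding bilR_def sum_lessThan_22
  by (simp add: gram_def e8m_def e8adj_def e8_block_form_def algebra_simps)

definition vec_at :: "nat \<Rightarrow> real list \<Rightarrow> nat \<Rightarrow> real" where
  "vec_at s xs i = (if s \<le> i \<and> i - s < length xs then xs ! (i - s) else 0)"

text \<open>An orthogonal basis of \<open>N\<^sub>\<real>\<close>: \<open>e \<pm> f\<close> in each copy of \<open>U\<close>, in each \<open>E\<^sub>8\<close> the Gram--Schmidt
  orthogonalisation of the simple roots (rescaled to integral coordinates), and the generators of
  \<open>\<langle>-2\<rangle>\<close> and \<open>\<langle>-2d\<rangle>\<close>.\<close>
definition e8_orth_basis :: "real list list" where
  "e8_orth_basis = [[1], [0, 1], [1, 0, 2], [2, 3, 4, 6], [2, 3, 4, 6, 5], [2, 3, 4, 6, 5, 4],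
     [2, 3, 4, 6, 5, 4, 3], [2, 3, 4, 6, 5, 4, 3, 2]]"

definition orth_basis :: "nat \<Rightarrow> nat \<Rightarrow> real" where
  "orth_basis k =
     (if k < 4 then vec_at (k - k mod 2) [1, if even k then 1 else -1]
      else if k < 12 then vec_at 4 (e8_orth_basis ! (k - 4))
      else if k < 20 then vec_at 12 (e8_orth_basis ! (k - 12))
      else vec_at k [1])"

lemma orth_basis_latR: "k < 22 \<Longrightarrow> orth_basis k \<in> latR"
proof -
  have "\<forall>k<22. orth_basis k \<in> latR"
    unfolding all_less_22_iff by (auto simp: latR_def orth_basis_def vec_at_def e8_orth_basis_def)
  then show "k < 22 \<Longrightarrow> ?thesis" by blast
qed

lemma bilR_orth_basis:
  shows "bilR d x (orth_basis 0) = x 0 + x 1"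
  and "bilR d x (orth_basis 1) = x 1 - x 0"
  and "bilR d x (orth_basis 2) = x 2 + x 3"
  and "bilR d x (orth_basis 3) = x 3 - x 2"
  and "bilR d x (orth_basis 4) = x 6 - 2 * x 4"
  and "bilR d x (orth_basis 5) = x 7 - 2 * x 5"
  and "bilR d x (orth_basis 6) = 2 * x 7 - 3 * x 6"
  and "bilR d x (orth_basis 7) = 6 * x 8 - 5 * x 7"
  and "bilR d x (orth_basis 8) = 5 * x 9 - 4 * x 8"
  and "bilR d x (orth_basis 9) = 4 * x 10 - 3 * x 9"
  and "bilR d x (orth_basis 10) = 3 * x 11 - 2 * x 10"
  and "bilR d x (orth_basis 11) = - x 11"
  and "bilR d x (orth_basis 12) = x 14 - 2 * x 12"
  and "bilR d x (orth_basis 13) = x 15 - 2 * x 13"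
  and "bilR d x (orth_basis 14) = 2 * x 15 - 3 * x 14"
  and "bilR d x (orth_basis 15) = 6 * x 16 - 5 * x 15"
  and "bilR d x (orth_basis 16) = 5 * x 17 - 4 * x 16"
  and "bilR d x (orth_basis 17) = 4 * x 18 - 3 * x 17"
  and "bilR d x (orth_basis 18) = 3 * x 19 - 2 * x 18"
  and "bilR d x (orth_basis 19) = - x 19"
  and "bilR d x (orth_basis 20) = - 2 * x 20"
  and "bilR d x (orth_basis 21) = - 2 * of_nat d * x 21"
  by (simp_all add: bilR_expand orth_basis_def vec_at_def e8_orth_basis_def e8_block_form_def
      algebra_simps)

lemma orth_basis_orthogonal:
  "i < 22 \<Longrightarrow> k < 22 \<Longrightarrow> i \<noteq> k \<Longrightarrow> bilR d (orth_basis i) (orth_basis k) = 0"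
proof -
  have "\<forall>k<22. \<forall>i<22. i \<noteq> k \<longrightarrow> bilR d (orth_basis i) (orth_basis k) = 0"
    unfolding all_less_22_iff bilR_orth_basis
    by (simp add: orth_basis_def vec_at_def e8_orth_basis_def)
  then show "i < 22 \<Longrightarrow> k < 22 \<Longrightarrow> i \<noteq> k \<Longrightarrow> ?thesis" by blast
qed

lemma orth_basis_anisotropic: "d > 0 \<Longrightarrow> k < 22 \<Longrightarrow> bilR d (orth_basis k) (orth_basis k) \<noteq> 0"
proof -
  assume "d > 0"
  then have "\<forall>k<22. bilR d (orth_basis k) (orth_basis k) \<noteq> 0"
    unfolding all_less_22_iff bilR_orth_basis by (simp add: orth_basis_def vec_at_def e8_orth_basis_def)
  then show "k < 22 \<Longrightarrow> ?thesis" by blast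
qed

lemma orth_basis_nondegenerate:
  assumes "d > 0" "z \<in> latR" "\<And>k. k < 22 \<Longrightarrow> bilR d z (orth_basis k) = 0"
  shows "z = (\<lambda>i. 0)"
proof -
  have "\<forall>k<22. bilR d z (orth_basis k) = 0" using assms(3) by blast
  then have "\<forall>i<22. z i = 0"
    unfolding all_less_22_iff bilR_orth_basis using \<open>d > 0\<close> by simp
  then show ?thesis using assms(2) by (auto simp: latR_def fun_eq_iff not_less[symmetric])
qed

section \<open>Reflections and the Cartan--Dieudonn\'e theorem\<close>

lemma gram_sym: "gram d i j = gram d j i"
proof -
  have "e8m i j = e8m j i" for i j
    unfolding e8m_def e8adj_def by (cases "i = j") (simp_all add: disj_commute)
  then show ?thesis unfolding gram_def by auto
qed

lemma bilR_sym: "bilR d x y = bilR d y x"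
  unfolding bilR_def by (subst sum.swap) (simp add: gram_sym mult.commute mult.left_commute)

lemma bil_sym: "bil d x y = bil d y x"
  unfolding bil_def by (subst sum.swap) (simp add: gram_sym mult.commute mult.left_commute)

lemma bilR_lincomb_left: "bilR d (\<lambda>i. a * x i + b * y i) z = a * bilR d x z + b * bilR d y z"
  by (simp add: bilR_def sum.distrib sum_distrib_left algebra_simps)

lemma bilR_lincomb_right: "bilR d z (\<lambda>i. a * x i + b * y i) = a * bilR d z x + b * bilR d z y"
  by (metis bilR_lincomb_left bilR_sym)

lemma bilR_add_left: "bilR d (\<lambda>i. x i + y i) z = bilR d x z + bilR d y z"
  using bilR_lincomb_left[of d 1 x 1 y z] by simp

lemma bilR_diff_left: "bilR d (\<lambda>i. x i - y i) z = bilR d x z - bilR d y z"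
  using bilR_lincomb_left[of d 1 x "-1" y z] by simp

lemma bilR_scale_left: "bilR d (\<lambda>i. a * x i) z = a * bilR d x z"
  using bilR_lincomb_left[of d a x 0 x z] by simp

lemma bilR_add_right: "bilR d z (\<lambda>i. x i + y i) = bilR d z x + bilR d z y"
  by (metis bilR_add_left bilR_sym)

lemma bilR_diff_right: "bilR d z (\<lambda>i. x i - y i) = bilR d z x - bilR d z y"
  by (metis bilR_diff_left bilR_sym)

lemma bilR_parallelogram:
  "bilR d (\<lambda>i. y i + x i) (\<lambda>i. y i + x i) + bilR d (\<lambda>i. y i - x i) (\<lambda>i. y i - x i)
     = 2 * bilR d x x + 2 * bilR d y y"
  by (simp add: bilR_add_left bilR_add_right bilR_diff_left bilR_diff_right bilR_sym[of d x y])

lemma bilR_reflR: "bilR d (reflR d v x) z = bilR d x z - 2 * bilR d x v / bilR d v v * bilR d v z"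
  unfolding reflR_def by (simp only: bilR_diff_left bilR_scale_left)

lemma reflR_isometry:
  assumes "bilR d v v \<noteq> 0"
  shows "bilR d (reflR d v x) (reflR d v y) = bilR d x y"
  using assms
  by (simp add: bilR_reflR bilR_sym[of d _ "reflR d v y"] bilR_sym[of d y v] bilR_sym[of d x v]
      field_simps) (simp add: bilR_sym[of d y x] algebra_simps)

lemma reflR_reflR:
  assumes "bilR d v v \<noteq> 0"
  shows "reflR d v (reflR d v x) = x"
proof -
  have "bilR d (reflR d v x) v = - bilR d x v" using assms by (simp add: bilR_reflR)
  then show ?thesis using assms by (simp add: reflR_def[of d v "reflR d v x"]) (simp add: reflR_def)
qed

lemma reflR_orthogonal: "bilR d x v = 0 \<Longrightarrow> reflR d v x = x"
  by (simp add: reflR_def)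

lemma reflR_commute:
  assumes "bilR d u v = 0"
  shows "reflR d u (reflR d v x) = reflR d v (reflR d u x)"
proof -
  have "bilR d v u = 0" using assms bilR_sym by metis
  then show ?thesis using assms
    by (simp add: reflR_def[of d u "reflR d v x"] reflR_def[of d v "reflR d u x"] bilR_reflR)
       (simp add: reflR_def fun_eq_iff algebra_simps)
qed

lemma reflR_swap:
  assumes "bilR d y y = bilR d x x" and "bilR d (\<lambda>i. y i - x i) (\<lambda>i. y i - x i) \<noteq> 0"
  shows "reflR d (\<lambda>i. y i - x i) y = x"
proof -
  let ?w = "\<lambda>i. y i - x i"
  have "bilR d ?w ?w = 2 * bilR d y ?w"
    using assms(1) by (simp add: bilR_diff_left bilR_diff_right bilR_sym[of d x y])
  then have "2 * bilR d y ?w / bilR d ?w ?w = 1" using assms(2) by simp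
  then show ?thesis unfolding reflR_def by simp
qed

lemma latR_reflR: "x \<in> latR \<Longrightarrow> v \<in> latR \<Longrightarrow> reflR d v x \<in> latR"
  by (simp add: latR_def reflR_def)

abbreviation reflections :: "nat \<Rightarrow> (nat \<Rightarrow> real) list \<Rightarrow> (nat \<Rightarrow> real) \<Rightarrow> (nat \<Rightarrow> real)" where
  "reflections d vs \<equiv> foldr (\<lambda>v f. reflR d v \<circ> f) vs id"

abbreviation spinor_prod :: "nat \<Rightarrow> (nat \<Rightarrow> real) list \<Rightarrow> real" where
  "spinor_prod d vs \<equiv> \<Prod>v\<leftarrow>vs. - bilR d v v / 2"

definition anisotropic_latR :: "nat \<Rightarrow> (nat \<Rightarrow> real) list \<Rightarrow> bool" where
  "anisotropic_latR d vs \<longleftrightarrow> (\<forall>v\<in>set vs. v \<in> latR \<and> bilR d v v \<noteq> 0)"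

definition is_reflection_product ::
  "nat \<Rightarrow> ((nat \<Rightarrow> real) \<Rightarrow> (nat \<Rightarrow> real)) \<Rightarrow> (nat \<Rightarrow> real) list \<Rightarrow> bool" where
  "is_reflection_product d F vs \<longleftrightarrow> anisotropic_latR d vs \<and> (\<forall>x\<in>latR. F x = reflections d vs x)"

definition isometryR :: "nat \<Rightarrow> ((nat \<Rightarrow> real) \<Rightarrow> (nat \<Rightarrow> real)) \<Rightarrow> bool" where
  "isometryR d F \<longleftrightarrow> (\<forall>x\<in>latR. F x \<in> latR) \<and> (\<forall>x\<in>latR. \<forall>y\<in>latR. bilR d (F x) (F y) = bilR d x y)"

lemma reflections_append: "reflections d (vs @ ws) x = reflections d vs (reflections d ws x)"
proof -
  have "foldr (\<lambda>v f. reflR d v \<circ> f) vs (reflections d ws) = reflections d vs \<circ> reflections d ws"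
    by (induction vs) (simp_all add: o_assoc)
  then show ?thesis by (metis foldr_append comp_apply)
qed

lemma reflections_rev_inverse:
  "anisotropic_latR d ws \<Longrightarrow> reflections d (rev ws) (reflections d ws x) = x"
  by (induction ws) (simp_all add: anisotropic_latR_def reflections_append reflR_reflR del: foldr_append)

lemma isometryR_reflections:
  assumes "anisotropic_latR d ws" and "isometryR d F"
  shows "isometryR d (reflections d ws \<circ> F)"
  using assms
  by (induction ws) (simp_all add: anisotropic_latR_def isometryR_def latR_reflR reflR_isometry)

lemma reflections_orthogonal:
  "(\<forall>w\<in>set ws. bilR d z w = 0) \<Longrightarrow> reflections d ws z = z"
  by (induction ws) (simp_all add: reflR_orthogonal)

text \<open>The reflection step of the Cartan--Dieudonn\'e theorem, with a second reflection in the
  case where \<open>y - x\<close> is isotropic (then \<open>y + x\<close> is not, by the parallelogram law).\<close>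
lemma reflections_map_to:
  assumes x: "x \<in> latR" and y: "y \<in> latR"
    and norm: "bilR d y y = bilR d x x" and aniso: "bilR d x x \<noteq> 0"
  obtains ws where "anisotropic_latR d ws" and "reflections d ws y = x"
    and "\<And>z. bilR d z x = 0 \<Longrightarrow> bilR d z y = 0 \<Longrightarrow> reflections d ws z = z"
proof (cases "bilR d (\<lambda>i. y i - x i) (\<lambda>i. y i - x i) = 0")
  case False
  show ?thesis
  proof (rule that[of "[\<lambda>i. y i - x i]"])
    show "anisotropic_latR d [\<lambda>i. y i - x i]"
      using x y False by (simp add: anisotropic_latR_def latR_def)
    show "reflections d [\<lambda>i. y i - x i] y = x" using reflR_swap[OF norm False] by simp
    show "reflections d [\<lambda>i. y i - x i] z = z" if "bilR d z x = 0" "bilR d z y = 0" for z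
      using that by (simp add: reflR_orthogonal bilR_diff_right)
  qed
next
  case True
  define x' where "x' = (\<lambda>i. - x i)"
  have xx': "bilR d x' x' = bilR d x x" and "bilR d x x' = - bilR d x x"
    using bilR_scale_left[of d "-1" x] bilR_sym[of d x x'] by (simp_all add: x'_def)
  then have x'x: "bilR d (\<lambda>i. x' i - x i) (\<lambda>i. x' i - x i) = 4 * bilR d x x"
    by (simp add: bilR_diff_left bilR_diff_right bilR_sym[of d x' x])
  have y_minus_x': "(\<lambda>i. y i - x' i) = (\<lambda>i. y i + x i)" by (simp add: x'_def)
  have yx': "bilR d (\<lambda>i. y i - x' i) (\<lambda>i. y i - x' i) = 4 * bilR d x x"
    unfolding y_minus_x' using bilR_parallelogram[where d=d and x=x and y=y] True norm by linarith
  show ?thesis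
  proof (rule that[of "[\<lambda>i. x' i - x i, \<lambda>i. y i - x' i]"])
    show "anisotropic_latR d [\<lambda>i. x' i - x i, \<lambda>i. y i - x' i]"
      using x y aniso x'x yx' by (simp add: anisotropic_latR_def latR_def x'_def)
    have "reflR d (\<lambda>i. y i - x' i) y = x'"
      by (rule reflR_swap) (use norm xx' yx' aniso in simp_all)
    moreover have "reflR d (\<lambda>i. x' i - x i) x' = x"
      by (rule reflR_swap) (use xx' x'x aniso in simp_all)
    ultimately show "reflections d [\<lambda>i. x' i - x i, \<lambda>i. y i - x' i] y = x" by simp
    show "reflections d [\<lambda>i. x' i - x i, \<lambda>i. y i - x' i] z = z"
      if "bilR d z x = 0" "bilR d z y = 0" for z
    proof (rule reflections_orthogonal)
      have "bilR d z x' = 0"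
        using that bilR_scale_left[of d "-1" x z] by (simp add: x'_def bilR_sym[of d z])
      then show "\<forall>w\<in>set [\<lambda>i. x' i - x i, \<lambda>i. y i - x' i]. bilR d z w = 0"
        using that by (simp add: bilR_diff_right)
    qed
  qed
qed

lemma isometryR_fixing_nondegenerate_family:
  assumes b_latR: "\<forall>k<22. b k \<in> latR"
    and b_nondeg: "\<forall>z\<in>latR. (\<forall>k<22. bilR d z (b k) = 0) \<longrightarrow> z = (\<lambda>i. 0)"
    and F: "isometryR d F" and F_fix: "\<forall>k<22. F (b k) = b k" and x: "x \<in> latR"
  shows "F x = x"
proof -
  have "(\<lambda>i. F x i - x i) \<in> latR" using F x by (simp add: isometryR_def latR_def)
  moreover have "bilR d (\<lambda>i. F x i - x i) (b k) = 0" if "k < 22" for k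
    using F F_fix x b_latR that by (metis bilR_diff_left isometryR_def right_minus_eq)
  ultimately have "(\<lambda>i. F x i - x i) = (\<lambda>i. 0)" using b_nondeg by blast
  then show ?thesis by (metis right_minus_eq ext)
qed

lemma isometryR_fix_next_basis_vector:
  fixes b :: "nat \<Rightarrow> nat \<Rightarrow> real"
  assumes b_latR: "\<forall>k<22. b k \<in> latR" and b_aniso: "\<forall>k<22. bilR d (b k) (b k) \<noteq> 0"
    and b_orth: "\<forall>i<22. \<forall>k<22. i \<noteq> k \<longrightarrow> bilR d (b i) (b k) = 0"
  assumes n: "n < 22" and F: "isometryR d F" and F_fix: "\<forall>i<n. F (b i) = b i"
  obtains ws where "anisotropic_latR d ws" "isometryR d (reflections d ws \<circ> F)"
    "\<forall>i<Suc n. (reflections d ws \<circ> F) (b i) = b i"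
proof -
  let ?x = "b n"
  have x: "?x \<in> latR" "bilR d ?x ?x \<noteq> 0" using b_latR b_aniso n by auto
  then have "F ?x \<in> latR" "bilR d (F ?x) (F ?x) = bilR d ?x ?x"
    using F by (simp_all add: isometryR_def)
  then obtain ws where ws: "anisotropic_latR d ws" "reflections d ws (F ?x) = ?x"
    and ws_fix: "\<And>z. bilR d z ?x = 0 \<Longrightarrow> bilR d z (F ?x) = 0 \<Longrightarrow> reflections d ws z = z"
    using reflections_map_to x by metis
  have "(reflections d ws \<circ> F) (b i) = b i" if "i < Suc n" for i
  proof (cases "i < n")
    case True
    have "bilR d (b i) ?x = 0" using b_orth True n by auto
    moreover have "bilR d (b i) (F ?x) = 0"
      using F F_fix \<open>bilR d (b i) ?x = 0\<close> b_latR True n x(1) by (metis isometryR_def less_trans)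
    ultimately show ?thesis using ws_fix True F_fix by simp
  next
    case False
    then show ?thesis using that ws(2) by (simp add: less_Suc_eq)
  qed
  then show ?thesis using that ws(1) isometryR_reflections[OF ws(1) F] by blast
qed

lemma isometryR_fixing_basis_prefix_is_reflection_product:
  fixes b :: "nat \<Rightarrow> nat \<Rightarrow> real"
  assumes b_latR: "\<forall>k<22. b k \<in> latR" and b_aniso: "\<forall>k<22. bilR d (b k) (b k) \<noteq> 0"
    and b_orth: "\<forall>i<22. \<forall>k<22. i \<noteq> k \<longrightarrow> bilR d (b i) (b k) = 0"
    and b_nondeg: "\<forall>z\<in>latR. (\<forall>k<22. bilR d z (b k) = 0) \<longrightarrow> z = (\<lambda>i. 0)"
  assumes "k \<le> 22" and "isometryR d F" and "\<forall>i<k. F (b i) = b i"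
  shows "\<exists>vs. is_reflection_product d F vs"
  using assms(5-7)
proof (induction k arbitrary: F rule: inc_induct)
  case base
  then have "is_reflection_product d F []"
    using isometryR_fixing_nondegenerate_family[OF b_latR b_nondeg]
    by (simp add: is_reflection_product_def anisotropic_latR_def)
  then show ?case by blast
next
  case (step n)
  obtain ws where ws: "anisotropic_latR d ws" "isometryR d (reflections d ws \<circ> F)"
    "\<forall>i<Suc n. (reflections d ws \<circ> F) (b i) = b i"
    using isometryR_fix_next_basis_vector[OF b_latR b_aniso b_orth step.hyps(2) step.prems] by blast
  then obtain vs where vs: "is_reflection_product d (reflections d ws \<circ> F) vs"
    using step.IH by blast
  have "F z = reflections d (rev ws @ vs) z" if "z \<in> latR" for z
  proof -
    have "reflections d ws (F z) = reflections d vs z"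
      using vs that by (simp add: is_reflection_product_def)
    then show ?thesis by (metis reflections_append reflections_rev_inverse ws(1))
  qed
  then have "is_reflection_product d F (rev ws @ vs)"
    using ws(1) vs by (auto simp: is_reflection_product_def anisotropic_latR_def)
  then show ?case by blast
qed

lemma isometryR_is_reflection_product:
  assumes "d > 0" and "isometryR d F"
  shows "\<exists>vs. is_reflection_product d F vs"
  using isometryR_fixing_basis_prefix_is_reflection_product[of orth_basis d 0 F] assms
    orth_basis_latR orth_basis_anisotropic orth_basis_orthogonal orth_basis_nondegenerate
  by simp

section \<open>Integral isometries\<close>

definition mat_mult :: "(nat \<Rightarrow> nat \<Rightarrow> int) \<Rightarrow> (nat \<Rightarrow> nat \<Rightarrow> int) \<Rightarrow> nat \<Rightarrow> nat \<Rightarrow> int" where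
  "mat_mult g h = (\<lambda>i j. if i < 22 \<and> j < 22 then (\<Sum>k<22. g i k * h k j) else 0)"

definition mat_one :: "nat \<Rightarrow> nat \<Rightarrow> int" where
  "mat_one = (\<lambda>i j. if i = j \<and> i < 22 then 1 else 0)"

lemma mv_mat_mult: "mv (mat_mult g h) x = mv g (mv h x)"
proof -
  have "(\<Sum>j<22. (\<Sum>k<22. g i k * h k j) * x j) = (\<Sum>k<22. g i k * (\<Sum>j<22. h k j * x j))" for i
    unfolding sum_distrib_left sum_distrib_right mult.assoc by (rule sum.swap)
  then show ?thesis by (simp add: mv_def mat_mult_def fun_eq_iff)
qed

lemma mvR_mat_mult: "mvR (mat_mult g h) x = mvR g (mvR h x)"
proof -
  have "(\<Sum>j<22. (\<Sum>k<22. of_int (g i k) * of_int (h k j)) * x j)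
      = (\<Sum>k<22. of_int (g i k) * (\<Sum>j<22. of_int (h k j) * x j :: real))" for i
    unfolding sum_distrib_left sum_distrib_right mult.assoc by (rule sum.swap)
  then show ?thesis by (simp add: mvR_def mat_mult_def fun_eq_iff)
qed

lemma mv_in_lat: "mv g x \<in> lat"
  by (simp add: mv_def lat_def)

lemma mvR_in_latR: "mvR g x \<in> latR"
  by (simp add: mvR_def latR_def)

lemma mv_mat_one: "x \<in> lat \<Longrightarrow> mv mat_one x = x"
  by (auto simp: mv_def mat_one_def lat_def fun_eq_iff if_distrib[of "\<lambda>a. a * _"] cong: if_cong)

lemma mat_one_OrthN: "mat_one \<in> OrthN d"
proof -
  have "bij_betw id lat lat" by simp
  then have "bij_betw (mv mat_one) lat lat"
    by (rule bij_betw_cong[THEN iffD1, rotated]) (simp add: mv_mat_one)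
  then show ?thesis unfolding OrthN_def by (auto simp: mv_mat_one) (simp_all add: mat_one_def)
qed

lemma mat_mult_OrthN:
  assumes "g \<in> OrthN d" and "h \<in> OrthN d"
  shows "mat_mult g h \<in> OrthN d"
proof -
  have "bij_betw (mv g \<circ> mv h) lat lat"
    using bij_betw_trans[of "mv h" lat lat "mv g" lat] assms by (simp add: OrthN_def)
  moreover have "mv g \<circ> mv h = mv (mat_mult g h)" by (simp add: fun_eq_iff mv_mat_mult)
  ultimately have "bij_betw (mv (mat_mult g h)) lat lat" by simp
  moreover have "\<forall>x\<in>lat. \<forall>y\<in>lat. bil d (mv (mat_mult g h) x) (mv (mat_mult g h) y) = bil d x y"
    using assms mv_in_lat by (simp add: OrthN_def mv_mat_mult)
  ultimately show ?thesis by (simp add: OrthN_def mat_mult_def)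
qed

lemma OrthPlusN_iff:
  "g \<in> OrthPlusN d \<longleftrightarrow> g \<in> OrthN d \<and> (\<exists>vs. is_reflection_product d (mvR g) vs \<and> spinor_prod d vs > 0)"
  by (auto simp: OrthPlusN_def is_reflection_product_def anisotropic_latR_def)

lemma mat_mult_OrthPlusN:
  assumes "g \<in> OrthN d" "h \<in> OrthN d"
    and "is_reflection_product d (mvR g) vs" "is_reflection_product d (mvR h) ws"
    and "spinor_prod d (vs @ ws) > 0"
  shows "mat_mult g h \<in> OrthPlusN d"
proof -
  have "mvR (mat_mult g h) x = reflections d (vs @ ws) x" if "x \<in> latR" for x
  proof -
    have "mvR h x = reflections d ws x"
      using assms(4) that by (simp add: is_reflection_product_def)
    moreover have "mvR g (mvR h x) = reflections d vs (mvR h x)"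
      using assms(3) mvR_in_latR by (simp add: is_reflection_product_def)
    ultimately show ?thesis by (simp add: mvR_mat_mult reflections_append del: foldr_append)
  qed
  then have "is_reflection_product d (mvR (mat_mult g h)) (vs @ ws)"
    using assms(3,4) by (auto simp: is_reflection_product_def anisotropic_latR_def)
  then show ?thesis using assms mat_mult_OrthN OrthPlusN_iff by blast
qed

definition real_vec :: "(nat \<Rightarrow> int) \<Rightarrow> nat \<Rightarrow> real" where
  "real_vec x = (\<lambda>i. of_int (x i))"

lemma bilR_real_vec: "bilR d (real_vec x) (real_vec y) = of_int (bil d x y)"
  by (simp add: bilR_def bil_def real_vec_def)

lemma mvR_real_vec: "mvR g (real_vec x) = real_vec (mv g x)"
  by (simp add: mvR_def mv_def real_vec_def fun_eq_iff)

lemma real_vec_latR: "x \<in> lat \<Longrightarrow> real_vec x \<in> latR"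
  by (simp add: lat_def latR_def real_vec_def)

lemma real_vec_inject: "real_vec x = real_vec y \<Longrightarrow> x = y"
  by (simp add: real_vec_def fun_eq_iff)

definition unit_vec :: "nat \<Rightarrow> nat \<Rightarrow> int" where
  "unit_vec a = (\<lambda>j. if j = a then 1 else 0)"

lemma unit_vec_lat: "a < 22 \<Longrightarrow> unit_vec a \<in> lat"
  by (simp add: unit_vec_def lat_def)

lemma sum_times_unit_vec: "a < 22 \<Longrightarrow> (\<Sum>j<22. f j * unit_vec a j) = (f a :: int)"
  by (simp add: unit_vec_def if_distrib[of "\<lambda>u. _ * u"] cong: if_cong)

lemma bil_mv_unit_vec:
  assumes "a < 22" "b < 22"
  shows "bil d (mv g (unit_vec a)) (mv g (unit_vec b)) = (\<Sum>i<22. \<Sum>j<22. g i a * gram d i j * g j b)"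
    and "bil d (unit_vec a) (unit_vec b) = gram d a b"
  using assms sum_times_unit_vec
  by (simp_all add: mv_def bil_def sum_times_unit_vec mult.commute[of "unit_vec _ _"])

lemma bilinear_sum_pullback:
  fixes f c g :: "nat \<Rightarrow> nat \<Rightarrow> real" and x y :: "nat \<Rightarrow> real"
  shows "(\<Sum>i<n. \<Sum>j<n. (\<Sum>a<n. f i a * x a) * c i j * (\<Sum>b<n. g j b * y b)) =
         (\<Sum>a<n. \<Sum>b<n. x a * (\<Sum>i<n. \<Sum>j<n. f i a * c i j * g j b) * y b)"
proof -
  have "(\<Sum>i<n. \<Sum>j<n. (\<Sum>a<n. f i a * x a) * c i j * (\<Sum>b<n. g j b * y b)) =
        (\<Sum>i<n. \<Sum>j<n. \<Sum>a<n. \<Sum>b<n. f i a * c i j * g j b * (x a * y b))"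
    by (simp add: sum_distrib_left sum_distrib_right mult_ac)
  also have "\<dots> = (\<Sum>a<n. \<Sum>b<n. \<Sum>i<n. \<Sum>j<n. f i a * c i j * g j b * (x a * y b))"
    by (subst (2) sum.swap, subst sum.swap, subst (3) sum.swap, subst (2) sum.swap) (rule refl)
  also have "\<dots> = (\<Sum>a<n. \<Sum>b<n. x a * (\<Sum>i<n. \<Sum>j<n. f i a * c i j * g j b) * y b)"
    by (simp add: sum_distrib_left sum_distrib_right mult_ac)
  finally show ?thesis .
qed

lemma OrthN_isometryR:
  assumes "g \<in> OrthN d"
  shows "isometryR d (mvR g)"
proof -
  have gram: "(\<Sum>i<22. \<Sum>j<22. of_int (g i a) * of_int (gram d i j) * of_int (g j b))
      = (of_int (gram d a b) :: real)"
    if "a < 22" "b < 22" for a b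
  proof -
    have "bil d (mv g (unit_vec a)) (mv g (unit_vec b)) = bil d (unit_vec a) (unit_vec b)"
      using assms unit_vec_lat that unfolding OrthN_def by blast
    then show ?thesis using that by (simp add: bil_mv_unit_vec flip: of_int_mult of_int_sum)
  qed
  have "bilR d (mvR g x) (mvR g y) = bilR d x y" for x y
  proof -
    have "bilR d (mvR g x) (mvR g y) = (\<Sum>i<22. \<Sum>j<22.
        (\<Sum>a<22. of_int (g i a) * x a) * of_int (gram d i j) * (\<Sum>b<22. of_int (g j b) * y b))"
      by (simp add: bilR_def mvR_def)
    also have "\<dots> = (\<Sum>a<22. \<Sum>b<22.
        x a * (\<Sum>i<22. \<Sum>j<22. of_int (g i a) * of_int (gram d i j) * of_int (g j b)) * y b)"
      by (rule bilinear_sum_pullback)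
    also have "\<dots> = bilR d x y" by (simp add: bilR_def gram)
    finally show ?thesis .
  qed
  then show ?thesis by (simp add: isometryR_def mvR_in_latR)
qed

lemma OrthN_is_reflection_product: "d > 0 \<Longrightarrow> g \<in> OrthN d \<Longrightarrow> \<exists>vs. is_reflection_product d (mvR g) vs"
  by (rule isometryR_is_reflection_product) (simp_all add: OrthN_isometryR)

section \<open>The divisor of a primitive vector\<close>

definition bil_unit :: "nat \<Rightarrow> (nat \<Rightarrow> int) \<Rightarrow> nat \<Rightarrow> int" where
  "bil_unit d z i = (\<Sum>j<22. gram d i j * z j)"

lemma bil_eq_sum_bil_unit: "bil d x z = (\<Sum>i<22. x i * bil_unit d z i)"
  by (simp add: bil_def bil_unit_def sum_distrib_left mult.assoc)

lemma bilR_real_vec_right: "bilR d x (real_vec z) = (\<Sum>i<22. x i * of_int (bil_unit d z i))"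
  by (simp add: bilR_def bil_unit_def real_vec_def sum_distrib_left mult.assoc)

lemma bil_unit_U_and_A1:
  "bil_unit d c 0 = c 1" "bil_unit d c 1 = c 0" "bil_unit d c 2 = c 3" "bil_unit d c 3 = c 2"
  "bil_unit d c 20 = - 2 * c 20"
  by (simp_all add: bil_unit_def sum_lessThan_22 gram_def)

lemma bil_unit_E8:
  assumes "s = 4 \<or> s = 12" and "l < 8"
  shows "bil_unit d c (s + l) = (\<Sum>m<8. e8m l m * c (s + m))"
proof -
  have "\<forall>l<8. bil_unit d c (4 + l) = (\<Sum>m<8. e8m l m * c (4 + m))"
    "\<forall>l<8. bil_unit d c (12 + l) = (\<Sum>m<8. e8m l m * c (12 + m))"
    unfolding all_less_8_iff bil_unit_def sum_lessThan_22 sum_lessThan_8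
    by (simp_all add: gram_def)
  then show ?thesis using assms by blast
qed

text \<open>The inverse of the Cartan matrix of \<open>E\<^sub>8\<close>; it is integral because \<open>E\<^sub>8\<close> is unimodular.\<close>
definition e8_cartan_inv :: "int list list" where
  "e8_cartan_inv =
    [[4, 5, 7, 10, 8, 6, 4, 2], [5, 8, 10, 15, 12, 9, 6, 3], [7, 10, 14, 20, 16, 12, 8, 4],
     [10, 15, 20, 30, 24, 18, 12, 6], [8, 12, 16, 24, 20, 15, 10, 5], [6, 9, 12, 18, 15, 12, 8, 4],
     [4, 6, 8, 12, 10, 8, 6, 3], [2, 3, 4, 6, 5, 4, 3, 2]]"

lemma e8_cartan_inv_mult_e8m:
  assumes "j < 8" "m < 8"
  shows "(\<Sum>l<8. e8_cartan_inv ! j ! l * e8m l m) = (if j = m then -1 else 0)"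
proof -
  have "\<forall>j<8. \<forall>m<8. (\<Sum>l<8. e8_cartan_inv ! j ! l * e8m l m) = (if j = m then -1 else 0)"
    unfolding all_less_8_iff sum_lessThan_8 by (simp add: e8_cartan_inv_def e8m_def e8adj_def)
  then show ?thesis using assms by blast
qed

lemma E8_coord_eq_sum_bil_unit:
  assumes "s = 4 \<or> s = 12" and "j < 8"
  shows "c (s + j) = - (\<Sum>l<8. e8_cartan_inv ! j ! l * bil_unit d c (s + l))"
proof -
  have "(\<Sum>l<8. e8_cartan_inv ! j ! l * bil_unit d c (s + l))
      = (\<Sum>l<8. \<Sum>m<8. e8_cartan_inv ! j ! l * e8m l m * c (s + m))"
    using assms(1) by (simp add: bil_unit_E8 sum_distrib_left mult.assoc)
  also have "\<dots> = (\<Sum>m<8. (\<Sum>l<8. e8_cartan_inv ! j ! l * e8m l m) * c (s + m))"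
    by (subst sum.swap) (simp add: sum_distrib_right)
  also have "\<dots> = - c (s + j)"
    using assms(2) by (simp add: e8_cartan_inv_mult_e8m if_distrib[of "\<lambda>u. u * _"] cong: if_cong)
  finally show ?thesis by simp
qed

lemma dvd_2_coords_of_dvd_bil_unit:
  fixes a :: int
  assumes dvd: "\<forall>i<22. a dvd bil_unit d c i" and "j < 21"
  shows "a dvd 2 * c j"
proof -
  have E8: "a dvd c (s + l)" if "s = 4 \<or> s = 12" "l < 8" for s l
  proof -
    have "a dvd (\<Sum>m<8. e8_cartan_inv ! l ! m * bil_unit d c (s + m))"
      using dvd that by (auto intro!: dvd_sum dvd_mult)
    then show ?thesis using E8_coord_eq_sum_bil_unit[OF that, of c d] by simp
  qed
  have U: "a dvd c 0" "a dvd c 1" "a dvd c 2" "a dvd c 3" "a dvd 2 * c 20"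
    using dvd unfolding all_less_22_iff by (simp_all add: bil_unit_U_and_A1[simplified])
  have "a dvd c j" if j: "j < 20"
  proof -
    consider "j < 4" | "4 \<le> j" "j < 12" | "12 \<le> j" "j < 20" using j by linarith
    then show ?thesis
    proof cases
      case 1
      then have "j \<in> {0, 1, 2, 3}" by auto
      then show ?thesis using U by auto
    next
      case 2 then show ?thesis using E8[of 4 "j - 4"] by simp
    next
      case 3 then show ?thesis using E8[of 12 "j - 12"] by simp
    qed
  qed
  then show ?thesis using U(5) \<open>j < 21\<close> by (cases "j = 20") auto
qed

definition primitive :: "(nat \<Rightarrow> int) \<Rightarrow> bool" where
  "primitive c \<longleftrightarrow> (\<forall>q. (\<forall>j<22. q dvd c j) \<longrightarrow> q dvd 1)"

lemma lat_eq_multiple_of_primitive: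
  assumes "x \<in> lat" and "x \<noteq> (\<lambda>i. 0)"
  obtains g c where "g \<noteq> 0" "c \<in> lat" "primitive c" "x = (\<lambda>i. g * c i)"
proof -
  define g where "g = Gcd (x ` {..<22})"
  have g_dvd: "g dvd x j" if "j < 22" for j using that by (simp add: g_def)
  have "g \<noteq> 0"
  proof
    assume "g = 0"
    then have "x i = 0" for i using assms(1) by (cases "i < 22") (auto simp: g_def Gcd_0_iff lat_def)
    then show False using assms(2) by auto
  qed
  define c where "c = (\<lambda>i. x i div g)"
  have x_eq: "x = (\<lambda>i. g * c i)"
  proof
    fix i show "x i = g * c i" using assms(1) g_dvd by (cases "i < 22") (auto simp: c_def lat_def)
  qed
  have "primitive c"
    unfolding primitive_def
  proof (intro allI impI)
    fix q assume q: "\<forall>j<22. q dvd c j"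
    have "q * g dvd Gcd (x ` {..<22})"
      using q by (auto simp: x_eq mult.commute[of q] intro!: Gcd_greatest mult_dvd_mono)
    then have "q * g dvd g" by (simp add: g_def)
    then show "q dvd 1" using \<open>g \<noteq> 0\<close> by (metis dvd_times_right_cancel_iff mult_1)
  qed
  moreover have "c \<in> lat" using assms(1) by (simp add: c_def lat_def)
  ultimately show ?thesis using that \<open>g \<noteq> 0\<close> x_eq by blast
qed

text \<open>The condition \<open>c 21 = 0\<close> puts \<open>c\<close> into \<open>U\<^sup>2 \<oplus> E\<^sub>8\<^sup>2 \<oplus> \<langle>-2\<rangle>\<close>, which bounds the divisor of
  \<open>c\<close> by 2.\<close>
lemma I2_primitive_vector:
  assumes "L \<in> I2 d"
  obtains c where "c \<in> L" "c \<in> lat" "c 21 = 0" "primitive c"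
proof -
  obtain e f where ef: "e \<in> lat" "f \<in> lat"
    and indep: "\<forall>a b. (\<lambda>i. a * e i + b * f i) = (\<lambda>i. 0) \<longrightarrow> a = 0 \<and> b = 0"
    and L_eq: "L = {(\<lambda>i. a * e i + b * f i) | a b. True}"
    and saturated: "\<forall>x\<in>lat. \<forall>k::int. k \<noteq> 0 \<and> (\<lambda>i. k * x i) \<in> L \<longrightarrow> x \<in> L"
    using assms unfolding I2_def by blast
  obtain \<alpha> \<beta> where "\<alpha> \<noteq> 0 \<or> \<beta> \<noteq> 0" and 21: "\<alpha> * e 21 + \<beta> * f 21 = 0"
  proof (cases "e 21 = 0 \<and> f 21 = 0")
    case True then show ?thesis using that[of 1 0] by simp
  next
    case False then show ?thesis using that[of "f 21" "- e 21"] by (auto simp: algebra_simps)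
  qed
  define x where "x = (\<lambda>i. \<alpha> * e i + \<beta> * f i)"
  have "x \<in> lat" "x \<noteq> (\<lambda>i. 0)"
    using ef indep \<open>\<alpha> \<noteq> 0 \<or> \<beta> \<noteq> 0\<close> by (auto simp: x_def lat_def)
  then obtain g c where c: "g \<noteq> 0" "c \<in> lat" "primitive c" "x = (\<lambda>i. g * c i)"
    by (rule lat_eq_multiple_of_primitive)
  have "x \<in> L" unfolding x_def L_eq by blast
  then have "c \<in> L" using saturated c by blast
  moreover have "c 21 = 0" using 21 c by (simp add: x_def fun_eq_iff)
  ultimately show ?thesis using that c by blast
qed

lemma bezout_Gcd_lessThan: "\<exists>u. (\<Sum>i<n. v i * u i) = Gcd ((v :: nat \<Rightarrow> int) ` {..<n})"
proof (induction n)
  case 0 then show ?case by simp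
next
  case (Suc n)
  then obtain u where u: "(\<Sum>i<n. v i * u i) = Gcd (v ` {..<n})" by blast
  obtain s t where st: "s * v n + t * Gcd (v ` {..<n}) = gcd (v n) (Gcd (v ` {..<n}))"
    using bezout_int by blast
  define u' where "u' = (\<lambda>i. if i = n then s else t * u i)"
  have "(\<Sum>i<n. v i * u' i) = t * (\<Sum>i<n. v i * u i)"
    by (simp add: u'_def sum_distrib_left mult_ac)
  then have "(\<Sum>i<Suc n. v i * u' i) = gcd (v n) (Gcd (v ` {..<n}))"
    using u st by (simp add: u'_def algebra_simps)
  also have "\<dots> = Gcd (v ` {..<Suc n})" by (simp add: lessThan_Suc Gcd_insert)
  finally show ?case by blast
qed

lemma primitive_dvd_2:
  fixes a :: int
  assumes dvd: "\<forall>j<22. a dvd 2 * c j" and "primitive c"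
  shows "a dvd 2"
proof (cases "even a")
  case True
  then obtain b where b: "a = 2 * b" by blast
  then have "\<forall>j<22. b dvd c j" using dvd by (simp add: mult_dvd_mono)
  then show ?thesis using \<open>primitive c\<close> b by (simp add: primitive_def)
next
  case False
  then have "coprime a 2" by (simp add: coprime_commute)
  then have "\<forall>j<22. a dvd c j" using dvd by (simp add: coprime_dvd_mult_right_iff)
  then show ?thesis using \<open>primitive c\<close> dvd_trans[of a 1 2] by (simp add: primitive_def)
qed

lemma primitive_divisor_1_or_2:
  assumes "c 21 = 0" and "primitive c"
  obtains a y where "a = 1 \<or> a = 2" "y \<in> lat" "bil d c y = a" "\<forall>j<22. a dvd bil_unit d c j"
proof -
  define a where "a = Gcd (bil_unit d c ` {..<22})"
  have dvd: "\<forall>j<22. a dvd bil_unit d c j" by (simp add: a_def)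
  have "\<forall>j<22. a dvd 2 * c j"
  proof (intro allI impI)
    fix j :: nat assume "j < 22"
    then show "a dvd 2 * c j"
      using dvd_2_coords_of_dvd_bil_unit[OF dvd] assms(1) by (cases "j = 21") auto
  qed
  then have "a dvd 2" using assms(2) by (rule primitive_dvd_2)
  moreover have "a \<ge> 0" by (simp add: a_def Gcd_int_greater_eq_0)
  ultimately have a: "a = 1 \<or> a = 2" using zdvd_imp_le[of a 2] by (cases "a = 0") auto
  obtain u where u: "(\<Sum>i<22. bil_unit d c i * u i) = a"
    using bezout_Gcd_lessThan[of "bil_unit d c" 22] by (auto simp: a_def)
  define y where "y = (\<lambda>j. if j < 22 then u j else 0)"
  have "bil d c y = bil d y c" by (rule bil_sym)
  also have "\<dots> = a" unfolding bil_eq_sum_bil_unit u[symmetric]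
    by (rule sum.cong) (auto simp: y_def mult.commute)
  finally have "bil d c y = a" .
  moreover have "y \<in> lat" by (simp add: y_def lat_def)
  ultimately show ?thesis using that a dvd by blast
qed

section \<open>An isometry of negative spinor product stabilising \<open>L\<close>\<close>

lemma hyperbolic_plane_reflections:
  fixes u v x :: "nat \<Rightarrow> real" and A :: real
  assumes vv: "bilR d v v = 0" and uv: "bilR d u v = A" and A0: "A \<noteq> 0"
  defines "p1 \<equiv> (\<lambda>i. u i + (1 - bilR d u u) / (2 * A) * v i)"
    and "p2 \<equiv> (\<lambda>i. u i + (- bilR d u u / A - (1 - bilR d u u) / (2 * A)) * v i)"
  shows "bilR d p1 p1 = 1" "bilR d p2 p2 = -1" "bilR d p2 p1 = 0"
    "reflR d p1 (reflR d p2 x) =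
       (\<lambda>i. x i - ((2 * A * bilR d x u - 2 * bilR d x v * bilR d u u) / (A * A)) * v i
            - (2 * bilR d x v / A) * u i)"
proof -
  have vu: "bilR d v u = A" using uv bilR_sym by metis
  have gen: "bilR d (\<lambda>i. u i + s * v i) (\<lambda>i. u i + s' * v i) = bilR d u u + (s + s') * A" for s s'
    using bilR_lincomb_left[of d 1 u s v] bilR_lincomb_right[of d _ 1 u _ v]
    by (simp add: vv uv vu algebra_simps)
  show p11: "bilR d p1 p1 = 1" and p22: "bilR d p2 p2 = -1" and p21: "bilR d p2 p1 = 0"
    unfolding p1_def p2_def gen using A0 by (simp_all add: field_simps)
  have xp: "bilR d x (\<lambda>i. u i + s * v i) = bilR d x u + s * bilR d x v" for s
    using bilR_lincomb_right[of d x 1 u s v] by simp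
  have "reflR d p1 (reflR d p2 x) = (\<lambda>i. x i + 2 * bilR d x p2 * p2 i - 2 * bilR d x p1 * p1 i)"
    unfolding reflR_def[of d p1] by (simp add: bilR_reflR p11 p21) (simp add: reflR_def p22)
  also have "\<dots> = (\<lambda>i. x i - ((2 * A * bilR d x u - 2 * bilR d x v * bilR d u u) / (A * A)) * v i
                          - (2 * bilR d x v / A) * u i)"
    unfolding p1_def p2_def xp using A0 by (simp add: fun_eq_iff field_simps)
  finally show "reflR d p1 (reflR d p2 x) = \<dots>" .
qed

text \<open>The integral matrix of \<open>x \<mapsto> x - ((2a(x,y) - 2(x,c)y\<^sup>2) / a\<^sup>2) c - (2(x,c) / a) y\<close>, which on
  \<open>c\<^sup>\<bottom>\<close> is the Eichler transvection \<open>z \<mapsto> z - (2/a)(z,y) c\<close>. When \<open>a\<close> divides \<open>(c, N)\<close> and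
  \<open>a \<in> {1, 2}\<close>, all divisions are exact.\<close>
definition eichler_mat :: "nat \<Rightarrow> (nat \<Rightarrow> int) \<Rightarrow> (nat \<Rightarrow> int) \<Rightarrow> int \<Rightarrow> nat \<Rightarrow> nat \<Rightarrow> int" where
  "eichler_mat d c y a = (\<lambda>i j. if i < 22 \<and> j < 22 then
      (if i = j then 1 else 0)
      - ((2 * a * bil_unit d y j - 2 * bil_unit d c j * bil d y y) div (a * a)) * c i
      - (2 * bil_unit d c j div a) * y i
    else 0)"

context
  fixes d :: nat and c y :: "nat \<Rightarrow> int" and a :: int
  assumes a: "a = 1 \<or> a = 2" and a_dvd: "\<forall>j<22. a dvd bil_unit d c j"
    and c_lat: "c \<in> lat" and y_lat: "y \<in> lat"
    and c_isotropic: "bil d c c = 0" and c_y: "bil d c y = a"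
begin

lemma eichler_coeffs_exact:
  assumes "j < 22"
  shows "a * a dvd 2 * a * bil_unit d y j - 2 * bil_unit d c j * bil d y y"
    and "a dvd 2 * bil_unit d c j"
proof -
  show "a * a dvd 2 * a * bil_unit d y j - 2 * bil_unit d c j * bil d y y"
  proof (cases "a = 1")
    case False
    then have a2: "a = 2" using a by simp
    then obtain k where "bil_unit d c j = 2 * k" using a_dvd assms by (metis dvd_def)
    then have "2 * a * bil_unit d y j - 2 * bil_unit d c j * bil d y y
        = (a * a) * (bil_unit d y j - k * bil d y y)"
      using a2 by (simp add: algebra_simps)
    then show ?thesis by simp
  qed simp
  show "a dvd 2 * bil_unit d c j" using a by auto
qed

lemma mvR_eichler_mat:
  assumes x: "x \<in> latR"
  shows "mvR (eichler_mat d c y a) x =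
    (\<lambda>i. x i - ((2 * of_int a * bilR d x (real_vec y) - 2 * bilR d x (real_vec c) * of_int (bil d y y))
                 / (of_int a * of_int a)) * real_vec c i
             - (2 * bilR d x (real_vec c) / of_int a) * real_vec y i)" (is "_ = ?rhs")
proof
  fix i
  define A where "A = real_of_int a"
  define YY where "YY = real_of_int (bil d y y)"
  have A0: "A \<noteq> 0" using a by (auto simp: A_def)
  have coeff_c: "real_of_int ((2 * a * bil_unit d y j - 2 * bil_unit d c j * bil d y y) div (a * a))
      = (2 * A * of_int (bil_unit d y j) - 2 * of_int (bil_unit d c j) * YY) / (A * A)" if "j < 22" for j
    using eichler_coeffs_exact(1)[OF that] by (simp add: real_of_int_div A_def YY_def)
  have coeff_y: "real_of_int (2 * bil_unit d c j div a) = 2 * of_int (bil_unit d c j) / A"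
    if "j < 22" for j
    using eichler_coeffs_exact(2)[OF that] by (simp add: real_of_int_div A_def)
  show "mvR (eichler_mat d c y a) x i = ?rhs i"
  proof (cases "i < 22")
    case False
    then show ?thesis using c_lat y_lat x by (simp add: mvR_def lat_def latR_def real_vec_def)
  next
    case True
    have "mvR (eichler_mat d c y a) x i = (\<Sum>j<22. of_int (eichler_mat d c y a i j) * x j)"
      using True by (simp add: mvR_def)
    also have "\<dots> = (\<Sum>j<22. (if i = j then x j else 0)
        - of_int (c i) * ((2 * A * of_int (bil_unit d y j) - 2 * of_int (bil_unit d c j) * YY) / (A * A) * x j)
        - of_int (y i) * (2 / A * (x j * of_int (bil_unit d c j))))"
      using True
      by (intro sum.cong refl) (auto simp: eichler_mat_def coeff_c coeff_y; simp add: algebra_simps)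
    also have "\<dots> = x i
        - of_int (c i) * (\<Sum>j<22. (2 * A * of_int (bil_unit d y j) - 2 * of_int (bil_unit d c j) * YY)
            / (A * A) * x j)
        - of_int (y i) * (2 / A * (\<Sum>j<22. x j * of_int (bil_unit d c j)))"
      using True by (simp add: sum_subtractf sum.delta sum_distrib_left)
    also have "(\<Sum>j<22. (2 * A * of_int (bil_unit d y j) - 2 * of_int (bil_unit d c j) * YY) / (A * A) * x j)
        = (2 * A * (\<Sum>j<22. x j * of_int (bil_unit d y j)) - 2 * (\<Sum>j<22. x j * of_int (bil_unit d c j)) * YY) / (A * A)"
      using A0 by (simp add: sum_divide_distrib sum_subtractf sum_distrib_left sum_distrib_right
          algebra_simps diff_divide_distrib)
    finally show ?thesis unfolding bilR_real_vec_right by (simp add: A_def YY_def real_vec_def mult_ac)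
  qed
qed

lemma eichler_mat_reflections:
  obtains p1 p2 where "p1 \<in> latR" "p2 \<in> latR" "bilR d p1 p1 = 1" "bilR d p2 p2 = -1"
    "bilR d p2 p1 = 0" "\<And>x. x \<in> latR \<Longrightarrow> mvR (eichler_mat d c y a) x = reflR d p1 (reflR d p2 x)"
proof -
  let ?u = "real_vec y" and ?v = "real_vec c" and ?A = "real_of_int a"
  have vv: "bilR d ?v ?v = 0" using c_isotropic by (simp add: bilR_real_vec)
  have uv: "bilR d ?u ?v = ?A" using c_y bil_sym[of d y c] by (simp add: bilR_real_vec)
  have A0: "?A \<noteq> 0" using a by auto
  define p1 where "p1 = (\<lambda>i. ?u i + (1 - bilR d ?u ?u) / (2 * ?A) * ?v i)"
  define p2 where "p2 = (\<lambda>i. ?u i + (- bilR d ?u ?u / ?A - (1 - bilR d ?u ?u) / (2 * ?A)) * ?v i)"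
  note hyp = hyperbolic_plane_reflections[OF vv uv A0, folded p1_def p2_def]
  show ?thesis
  proof (rule that[OF _ _ hyp(1-3)])
    show "p1 \<in> latR" "p2 \<in> latR"
      using c_lat y_lat by (simp_all add: p1_def p2_def real_vec_def lat_def latR_def)
    show "mvR (eichler_mat d c y a) x = reflR d p1 (reflR d p2 x)" if "x \<in> latR" for x
      using mvR_eichler_mat[OF that] hyp(4)[of x] by (simp add: bilR_real_vec)
  qed
qed

lemma eichler_mat_involution: "z \<in> lat \<Longrightarrow> mv (eichler_mat d c y a) (mv (eichler_mat d c y a) z) = z"
proof -
  assume z: "z \<in> lat"
  obtain p1 p2 where "p1 \<in> latR" "p2 \<in> latR"
    and p: "bilR d p1 p1 = 1" "bilR d p2 p2 = -1" "bilR d p2 p1 = 0"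
    and h: "\<And>x. x \<in> latR \<Longrightarrow> mvR (eichler_mat d c y a) x = reflR d p1 (reflR d p2 x)"
    using eichler_mat_reflections by blast
  let ?z = "real_vec z"
  have "real_vec (mv (eichler_mat d c y a) (mv (eichler_mat d c y a) z))
      = reflR d p1 (reflR d p2 (reflR d p1 (reflR d p2 ?z)))"
    using h mvR_in_latR real_vec_latR[OF z] by (metis mvR_real_vec)
  also have "\<dots> = reflR d p1 (reflR d p1 (reflR d p2 (reflR d p2 ?z)))"
    using reflR_commute[OF p(3)] by simp
  also have "\<dots> = ?z" using p by (simp add: reflR_reflR)
  finally show ?thesis by (rule real_vec_inject)
qed

lemma eichler_mat_OrthN: "eichler_mat d c y a \<in> OrthN d"
proof -
  let ?h = "eichler_mat d c y a"
  obtain p1 p2 where "p1 \<in> latR" "p2 \<in> latR"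
    and p: "bilR d p1 p1 = 1" "bilR d p2 p2 = -1" "bilR d p2 p1 = 0"
    and h: "\<And>x. x \<in> latR \<Longrightarrow> mvR ?h x = reflR d p1 (reflR d p2 x)"
    using eichler_mat_reflections by blast
  have "bil d (mv ?h x) (mv ?h z) = bil d x z" if "x \<in> lat" "z \<in> lat" for x z
  proof -
    have "real_of_int (bil d (mv ?h x) (mv ?h z)) = bilR d (mvR ?h (real_vec x)) (mvR ?h (real_vec z))"
      by (simp add: bilR_real_vec mvR_real_vec)
    also have "\<dots> = real_of_int (bil d x z)"
      using that h p by (simp add: real_vec_latR reflR_isometry bilR_real_vec)
    finally show ?thesis by simp
  qed
  moreover have "bij_betw (mv ?h) lat lat"
    by (rule bij_betw_byWitness[where f'="mv ?h"]) (auto simp: eichler_mat_involution mv_in_lat)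
  ultimately show ?thesis unfolding OrthN_def by (auto simp: eichler_mat_def)
qed

lemma eichler_mat_spinor_negative:
  "\<exists>vs. is_reflection_product d (mvR (eichler_mat d c y a)) vs \<and> spinor_prod d vs < 0"
proof -
  obtain p1 p2 where "p1 \<in> latR" "p2 \<in> latR" "bilR d p1 p1 = 1" "bilR d p2 p2 = -1"
    "bilR d p2 p1 = 0" and "\<And>x. x \<in> latR \<Longrightarrow> mvR (eichler_mat d c y a) x = reflR d p1 (reflR d p2 x)"
    using eichler_mat_reflections by blast
  then have "is_reflection_product d (mvR (eichler_mat d c y a)) [p1, p2] \<and> spinor_prod d [p1, p2] < 0"
    by (simp add: is_reflection_product_def anisotropic_latR_def)
  then show ?thesis by blast
qed

lemma mv_eichler_mat_orthogonal:
  assumes z: "z \<in> lat" and "bil d z c = 0"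
  shows "mv (eichler_mat d c y a) z = (\<lambda>i. z i - ((2 div a) * bil d z y) * c i)"
proof (rule real_vec_inject)
  have "bilR d (real_vec z) (real_vec y) = of_int (bil d z y)" "bilR d (real_vec z) (real_vec c) = 0"
    using assms(2) by (simp_all add: bilR_real_vec)
  then show "real_vec (mv (eichler_mat d c y a) z) = real_vec (\<lambda>i. z i - ((2 div a) * bil d z y) * c i)"
    unfolding mvR_real_vec[symmetric] mvR_eichler_mat[OF real_vec_latR[OF z]]
    using a by (auto simp: real_vec_def fun_eq_iff field_simps)
qed

end

section \<open>Orbits\<close>

lemma I2_subset_lat: "L \<in> I2 d \<Longrightarrow> L \<subseteq> lat"
  unfolding I2_def lat_def by auto

lemma I2_isotropic: "L \<in> I2 d \<Longrightarrow> x \<in> L \<Longrightarrow> z \<in> L \<Longrightarrow> bil d x z = 0"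
  unfolding I2_def by blast

lemma I2_diff_multiple:
  assumes "L \<in> I2 d" "z \<in> L" "w \<in> L"
  shows "(\<lambda>i. z i - k * w i) \<in> L"
proof -
  obtain e f where L: "L = {(\<lambda>i. a * e i + b * f i) | a b. True}"
    using assms(1) unfolding I2_def by blast
  obtain a1 b1 a2 b2 where "z = (\<lambda>i. a1 * e i + b1 * f i)" "w = (\<lambda>i. a2 * e i + b2 * f i)"
    using assms(2,3) L by blast
  then have "(\<lambda>i. z i - k * w i) = (\<lambda>i. (a1 - k * a2) * e i + (b1 - k * b2) * f i)"
    by (simp add: fun_eq_iff algebra_simps)
  then show ?thesis using L by blast
qed

lemma I2_stabiliser_spinor_negative:
  assumes L: "L \<in> I2 d"
  obtains h vs where "h \<in> OrthN d" "mv h ` L = L"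
    "is_reflection_product d (mvR h) vs" "spinor_prod d vs < 0"
proof -
  obtain c where c: "c \<in> L" "c \<in> lat" "c 21 = 0" "primitive c"
    using I2_primitive_vector[OF L] by blast
  obtain a y where a: "a = 1 \<or> a = 2" "y \<in> lat" "bil d c y = a" "\<forall>j<22. a dvd bil_unit d c j"
    using primitive_divisor_1_or_2[OF c(3,4)] by blast
  have c_isotropic: "bil d c c = 0" using I2_isotropic[OF L c(1) c(1)] .
  note eichler = a(1) a(4) c(2) a(2) c_isotropic a(3)
  let ?h = "eichler_mat d c y a"
  have into: "mv ?h z \<in> L" if z: "z \<in> L" for z
  proof -
    have "mv ?h z = (\<lambda>i. z i - ((2 div a) * bil d z y) * c i)"
      using mv_eichler_mat_orthogonal[OF eichler] I2_subset_lat[OF L] I2_isotropic[OF L z c(1)] z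
      by blast
    then show ?thesis using I2_diff_multiple[OF L z c(1)] by simp
  qed
  have "mv ?h ` L = L"
  proof
    show "L \<subseteq> mv ?h ` L"
    proof
      fix z assume z: "z \<in> L"
      have "z = mv ?h (mv ?h z)" using eichler_mat_involution[OF eichler] z I2_subset_lat[OF L] by auto
      then show "z \<in> mv ?h ` L" using into[OF z] by blast
    qed
  qed (use into in blast)
  then show ?thesis
    using that eichler_mat_OrthN[OF eichler] eichler_mat_spinor_negative[OF eichler] by blast
qed

lemma OrthN_image_I2_eq_OrthPlusN_image:
  assumes d: "d > 0" and L: "L \<in> I2 d" and g: "g \<in> OrthN d"
  obtains q where "q \<in> OrthPlusN d" "mv q ` L = mv g ` L"
proof -
  obtain vs where vs: "is_reflection_product d (mvR g) vs"
    using OrthN_is_reflection_product[OF d g] by blast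
  have "spinor_prod d vs \<noteq> 0"
    using vs by (auto simp: is_reflection_product_def anisotropic_latR_def prod_list_zero_iff)
  then consider "spinor_prod d vs > 0" | "spinor_prod d vs < 0" by linarith
  then show ?thesis
  proof cases
    case 1
    then show ?thesis using that g vs OrthPlusN_iff by blast
  next
    case 2
    obtain h ws where h: "h \<in> OrthN d" "mv h ` L = L"
      and ws: "is_reflection_product d (mvR h) ws" "spinor_prod d ws < 0"
      by (rule I2_stabiliser_spinor_negative[OF L])
    have "spinor_prod d (vs @ ws) > 0" using 2 ws(2) by (simp add: mult_neg_neg)
    then have "mat_mult g h \<in> OrthPlusN d" using mat_mult_OrthPlusN g h(1) vs ws(1) by blast
    moreover have "mv (mat_mult g h) ` L = mv g ` L"
      using h(2) by (simp add: mv_mat_mult image_image[symmetric])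
    ultimately show ?thesis by (rule that)
  qed
qed

lemma orbrel_OrthN_eq_OrthPlusN:
  assumes d: "d > 0"
  shows "orbrel d (OrthN d) = orbrel d (OrthPlusN d)"
proof
  show "orbrel d (OrthPlusN d) \<subseteq> orbrel d (OrthN d)" unfolding orbrel_def OrthPlusN_def by blast
  show "orbrel d (OrthN d) \<subseteq> orbrel d (OrthPlusN d)"
  proof
    fix p assume "p \<in> orbrel d (OrthN d)"
    then obtain L g where L: "L \<in> I2 d" "mv g ` L \<in> I2 d" and g: "g \<in> OrthN d"
      and p: "p = (L, mv g ` L)"
      unfolding orbrel_def by blast
    obtain q where "q \<in> OrthPlusN d" "mv q ` L = mv g ` L"
      by (rule OrthN_image_I2_eq_OrthPlusN_image[OF d L(1) g])
    then show "p \<in> orbrel d (OrthPlusN d)" using L p unfolding orbrel_def by blast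
  qed
qed

lemma orbrel_OrthN_Image_class:
  assumes "X \<in> I2 d // orbrel d (OrthN d)"
  shows "orbrel d (OrthN d) `` X = X"
proof -
  let ?R = "orbrel d (OrthN d)"
  have refl: "(L, L) \<in> ?R" if L: "L \<in> I2 d" for L
  proof -
    have "mv mat_one ` L = L" using I2_subset_lat[OF L] mv_mat_one by (simp add: subset_iff image_iff)
    then show ?thesis using L mat_one_OrthN unfolding orbrel_def by blast
  qed
  have trans: "(L1, L3) \<in> ?R" if r: "(L1, L2) \<in> ?R" "(L2, L3) \<in> ?R" for L1 L2 L3
  proof -
    obtain g h where "g \<in> OrthN d" "h \<in> OrthN d" "mv g ` L1 = L2" "mv h ` L2 = L3"
      and "L1 \<in> I2 d" "L3 \<in> I2 d"
      using r unfolding orbrel_def by blast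
    moreover have "mv (mat_mult h g) ` L1 = mv h ` mv g ` L1" by (simp add: mv_mat_mult image_image)
    ultimately show ?thesis using mat_mult_OrthN unfolding orbrel_def by blast
  qed
  from assms obtain L where "L \<in> I2 d" "X = ?R `` {L}" by (auto simp: quotient_def)
  then show ?thesis using refl trans by blast
qed

theorem mainTheorem19:
  fixes d :: nat
  assumes "d > 0" and "squarefree d"
  shows "bij_betw (\<lambda>X. orbrel d (OrthN d) `` X)
           (I2 d // orbrel d (OrthPlusN d)) (I2 d // orbrel d (OrthN d))"
proof -
  have "bij_betw id (I2 d // orbrel d (OrthN d)) (I2 d // orbrel d (OrthN d))" by simp
  then show ?thesis
    unfolding orbrel_OrthN_eq_OrthPlusN[OF assms(1), symmetric]
    by (rule bij_betw_cong[THEN iffD1, rotated]) (simp add: orbrel_OrthN_Image_class)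
qed

end
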